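(* Let $C$ be a double category. Then $C$ is globularily generated if and only if $C$ is minimal among internalizations of its decorated horizontalization $H^*C$, i.e. if and only if there is no proper sub-double category $D$ of $C$ with $H^*D=H^*C$.
   Context: A double category $C$ (not assumed strict) consists of a category $C_0$ (objects and vertical morphisms), a category $C_1$ (objects: horizontal morphisms; morphisms: 2-morphisms, composed vertically), source/target functors $s,t:C_1\to C_0$, horizontal identity functor $i:C_0\to C_1$, horizontal composition functor $\ast:C_1\times_{C_0}C_1\to C_1$, and unitor and associator natural isomorphisms with globular components satisfying the usual coherence axioms. A 2-morphism $\Phi$ is globular if $s\Phi,t\Phi$ are identity vertical morphisms. A sub-double category $D$ of $C$: $D_0,D_1$ subcategories of $C_0,C_1$ such that $s,t,i,\ast$, unitors and associator of $C$ restrict to those of $D$. It is complete if it has the same objects, vertical morphisms and horizontal morphisms as $C$. The complete sub-double category generated by a collection $X$ of 2-morphisms is the intersection of all complete sub-double categories containing $X$. $C$ is globularily generated if $C$ equals the complete sub-double category generated by its globular 2-morphisms. The horizontal bicategory $HC$ has objects, horizontal morphisms and globular 2-morphisms of $C$ as 0-,1-,2-cells; the decorated horizontalization is $H^*C=(C_0,HC)$. A double category $E$ is an internalization of a pair $(B^*,B)$ (a category $B^*$ whose object collection equals the 0-cells of the bicategory $B$) if $H^*E=(B^*,B)$. *)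

theory Defs
  imports Main
begin

text \<open>
C_0: objects Ob, vertical morphisms Ver, with vdom, vcod, vcomp (vcomp g f = g after f), vid.
  C_1: objects = horizontal morphisms Hor, morphisms = 2-morphisms (squares) Sq,
       with sdom, scod (horizontal source/target of a square in C_1),
       vertical composition scomp (scomp b a = b after a) and identity squares sid.
  Source / target functors s,t : C_1 -> C_0:  (hsrc, ssrc) and (htgt, stgt).
  Horizontal identity functor i : C_0 -> C_1:  (hunit, sunit).
  Horizontal composition functor on C_1 x_{C_0} C_1: (hcomp, shcomp), written in
  diagrammatic order: hcomp x y is defined when htgt x = hsrc y.
\<close>

record ('o, 'v, 'h, 'c) dbl =
  Ob :: "'o set"
  Ver :: "'v set"
  vdom :: "'v \<Rightarrow> 'o"
  vcod :: "'v \<Rightarrow> 'o"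
  vcomp :: "'v \<Rightarrow> 'v \<Rightarrow> 'v"
  vid :: "'o \<Rightarrow> 'v"
  Hor :: "'h set"
  Sq :: "'c set"
  sdom :: "'c \<Rightarrow> 'h"
  scod :: "'c \<Rightarrow> 'h"
  scomp :: "'c \<Rightarrow> 'c \<Rightarrow> 'c"
  sid :: "'h \<Rightarrow> 'c"
  hsrc :: "'h \<Rightarrow> 'o"
  htgt :: "'h \<Rightarrow> 'o"
  ssrc :: "'c \<Rightarrow> 'v"
  stgt :: "'c \<Rightarrow> 'v"
  hunit :: "'o \<Rightarrow> 'h"
  sunit :: "'v \<Rightarrow> 'c"
  hcomp :: "'h \<Rightarrow> 'h \<Rightarrow> 'h"
  shcomp :: "'c \<Rightarrow> 'c \<Rightarrow> 'c"
  lunit :: "'h \<Rightarrow> 'c"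
  runit :: "'h \<Rightarrow> 'c"
  assoc :: "'h \<Rightarrow> 'h \<Rightarrow> 'h \<Rightarrow> 'c"

definition cat_axioms ::
  "'a set \<Rightarrow> 'm set \<Rightarrow> ('m \<Rightarrow> 'a) \<Rightarrow> ('m \<Rightarrow> 'a) \<Rightarrow> ('m \<Rightarrow> 'm \<Rightarrow> 'm) \<Rightarrow> ('a \<Rightarrow> 'm) \<Rightarrow> bool"
  where
  "cat_axioms Ob1 Mor1 dm cd cp idm \<longleftrightarrow>
     (\<forall>f\<in>Mor1. dm f \<in> Ob1 \<and> cd f \<in> Ob1) \<and>
     (\<forall>a\<in>Ob1. idm a \<in> Mor1 \<and> dm (idm a) = a \<and> cd (idm a) = a) \<and>
     (\<forall>f\<in>Mor1. \<forall>g\<in>Mor1. cd f = dm g \<longrightarrow>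
        cp g f \<in> Mor1 \<and> dm (cp g f) = dm f \<and> cd (cp g f) = cd g) \<and>
     (\<forall>f\<in>Mor1. cp f (idm (dm f)) = f \<and> cp (idm (cd f)) f = f) \<and>
     (\<forall>f\<in>Mor1. \<forall>g\<in>Mor1. \<forall>h\<in>Mor1. cd f = dm g \<longrightarrow> cd g = dm h \<longrightarrow>
        cp h (cp g f) = cp (cp h g) f)"

definition functor_axioms ::
  "'a set \<Rightarrow> 'm set \<Rightarrow> ('m \<Rightarrow> 'a) \<Rightarrow> ('m \<Rightarrow> 'a) \<Rightarrow> ('m \<Rightarrow> 'm \<Rightarrow> 'm) \<Rightarrow> ('a \<Rightarrow> 'm) \<Rightarrow>
   'b set \<Rightarrow> 'n set \<Rightarrow> ('n \<Rightarrow> 'b) \<Rightarrow> ('n \<Rightarrow> 'b) \<Rightarrow> ('n \<Rightarrow> 'n \<Rightarrow> 'n) \<Rightarrow> ('b \<Rightarrow> 'n) \<Rightarrow>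
   ('a \<Rightarrow> 'b) \<Rightarrow> ('m \<Rightarrow> 'n) \<Rightarrow> bool"
  where
  "functor_axioms Ob1 Mor1 dm cd cp idm Ob2 Mor2 dm2 cd2 cp2 id2 Fo Fm \<longleftrightarrow>
     (\<forall>a\<in>Ob1. Fo a \<in> Ob2) \<and>
     (\<forall>f\<in>Mor1. Fm f \<in> Mor2 \<and> dm2 (Fm f) = Fo (dm f) \<and> cd2 (Fm f) = Fo (cd f)) \<and>
     (\<forall>a\<in>Ob1. Fm (idm a) = id2 (Fo a)) \<and>
     (\<forall>f\<in>Mor1. \<forall>g\<in>Mor1. cd f = dm g \<longrightarrow> Fm (cp g f) = cp2 (Fm g) (Fm f))"

definition globular :: "('o, 'v, 'h, 'c, 'e) dbl_scheme \<Rightarrow> 'c \<Rightarrow> bool" where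
  "globular C a \<longleftrightarrow> a \<in> Sq C \<and>
     (\<exists>x\<in>Ob C. ssrc C a = vid C x) \<and> (\<exists>y\<in>Ob C. stgt C a = vid C y)"

definition iso_in :: "('o, 'v, 'h, 'c, 'e) dbl_scheme \<Rightarrow> 'c set \<Rightarrow> 'c \<Rightarrow> bool" where
  "iso_in C S a \<longleftrightarrow> (\<exists>b\<in>S. sdom C b = scod C a \<and> scod C b = sdom C a \<and>
       scomp C b a = sid C (sdom C a) \<and> scomp C a b = sid C (scod C a))"

definition double_category :: "('o, 'v, 'h, 'c, 'e) dbl_scheme \<Rightarrow> bool" where
  "double_category C \<longleftrightarrow>
   \<comment> \<open>C_0 and C_1 are categories\<close>
   cat_axioms (Ob C) (Ver C) (vdom C) (vcod C) (vcomp C) (vid C) \<and>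
   cat_axioms (Hor C) (Sq C) (sdom C) (scod C) (scomp C) (sid C) \<and>
   \<comment> \<open>s, t : C_1 \<rightarrow> C_0 and i : C_0 \<rightarrow> C_1 are functors\<close>
   functor_axioms (Hor C) (Sq C) (sdom C) (scod C) (scomp C) (sid C)
                  (Ob C) (Ver C) (vdom C) (vcod C) (vcomp C) (vid C) (hsrc C) (ssrc C) \<and>
   functor_axioms (Hor C) (Sq C) (sdom C) (scod C) (scomp C) (sid C)
                  (Ob C) (Ver C) (vdom C) (vcod C) (vcomp C) (vid C) (htgt C) (stgt C) \<and>
   functor_axioms (Ob C) (Ver C) (vdom C) (vcod C) (vcomp C) (vid C)
                  (Hor C) (Sq C) (sdom C) (scod C) (scomp C) (sid C) (hunit C) (sunit C) \<and>
   \<comment> \<open>s \<circ> i = id = t \<circ> i\<close>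
   (\<forall>a\<in>Ob C. hsrc C (hunit C a) = a \<and> htgt C (hunit C a) = a) \<and>
   (\<forall>f\<in>Ver C. ssrc C (sunit C f) = f \<and> stgt C (sunit C f) = f) \<and>
   \<comment> \<open>horizontal composition: a functor C_1 \<times>_{C_0} C_1 \<rightarrow> C_1 compatible with s and t\<close>
   (\<forall>x\<in>Hor C. \<forall>y\<in>Hor C. htgt C x = hsrc C y \<longrightarrow>
      hcomp C x y \<in> Hor C \<and> hsrc C (hcomp C x y) = hsrc C x \<and> htgt C (hcomp C x y) = htgt C y) \<and>
   (\<forall>a\<in>Sq C. \<forall>b\<in>Sq C. stgt C a = ssrc C b \<longrightarrow>
      shcomp C a b \<in> Sq C \<and>
      sdom C (shcomp C a b) = hcomp C (sdom C a) (sdom C b) \<and>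
      scod C (shcomp C a b) = hcomp C (scod C a) (scod C b) \<and>
      ssrc C (shcomp C a b) = ssrc C a \<and> stgt C (shcomp C a b) = stgt C b) \<and>
   (\<forall>x\<in>Hor C. \<forall>y\<in>Hor C. htgt C x = hsrc C y \<longrightarrow>
      shcomp C (sid C x) (sid C y) = sid C (hcomp C x y)) \<and>
   (\<forall>a\<in>Sq C. \<forall>a'\<in>Sq C. \<forall>b\<in>Sq C. \<forall>b'\<in>Sq C.
      scod C a = sdom C a' \<longrightarrow> scod C b = sdom C b' \<longrightarrow>
      stgt C a = ssrc C b \<longrightarrow> stgt C a' = ssrc C b' \<longrightarrow>
      shcomp C (scomp C a' a) (scomp C b' b) = scomp C (shcomp C a' b') (shcomp C a b)) \<and>
   \<comment> \<open>left unitor: globular natural isomorphism\<close>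
   (\<forall>x\<in>Hor C. lunit C x \<in> Sq C \<and> globular C (lunit C x) \<and> iso_in C (Sq C) (lunit C x) \<and>
      sdom C (lunit C x) = hcomp C (hunit C (hsrc C x)) x \<and> scod C (lunit C x) = x) \<and>
   (\<forall>a\<in>Sq C. scomp C a (lunit C (sdom C a)) =
      scomp C (lunit C (scod C a)) (shcomp C (sunit C (ssrc C a)) a)) \<and>
   \<comment> \<open>right unitor: globular natural isomorphism\<close>
   (\<forall>x\<in>Hor C. runit C x \<in> Sq C \<and> globular C (runit C x) \<and> iso_in C (Sq C) (runit C x) \<and>
      sdom C (runit C x) = hcomp C x (hunit C (htgt C x)) \<and> scod C (runit C x) = x) \<and>
   (\<forall>a\<in>Sq C. scomp C a (runit C (sdom C a)) =
      scomp C (runit C (scod C a)) (shcomp C a (sunit C (stgt C a)))) \<and>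
   \<comment> \<open>associator: globular natural isomorphism\<close>
   (\<forall>x\<in>Hor C. \<forall>y\<in>Hor C. \<forall>z\<in>Hor C. htgt C x = hsrc C y \<longrightarrow> htgt C y = hsrc C z \<longrightarrow>
      assoc C x y z \<in> Sq C \<and> globular C (assoc C x y z) \<and> iso_in C (Sq C) (assoc C x y z) \<and>
      sdom C (assoc C x y z) = hcomp C (hcomp C x y) z \<and>
      scod C (assoc C x y z) = hcomp C x (hcomp C y z)) \<and>
   (\<forall>a\<in>Sq C. \<forall>b\<in>Sq C. \<forall>c\<in>Sq C. stgt C a = ssrc C b \<longrightarrow> stgt C b = ssrc C c \<longrightarrow>
      scomp C (assoc C (scod C a) (scod C b) (scod C c)) (shcomp C (shcomp C a b) c) =
      scomp C (shcomp C a (shcomp C b c)) (assoc C (sdom C a) (sdom C b) (sdom C c))) \<and>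
   \<comment> \<open>coherence: pentagon and triangle\<close>
   (\<forall>w\<in>Hor C. \<forall>x\<in>Hor C. \<forall>y\<in>Hor C. \<forall>z\<in>Hor C.
      htgt C w = hsrc C x \<longrightarrow> htgt C x = hsrc C y \<longrightarrow> htgt C y = hsrc C z \<longrightarrow>
      scomp C (assoc C w x (hcomp C y z)) (assoc C (hcomp C w x) y z) =
      scomp C (shcomp C (sid C w) (assoc C x y z))
        (scomp C (assoc C w (hcomp C x y) z) (shcomp C (assoc C w x y) (sid C z)))) \<and>
   (\<forall>x\<in>Hor C. \<forall>y\<in>Hor C. htgt C x = hsrc C y \<longrightarrow>
      scomp C (shcomp C (sid C x) (lunit C y)) (assoc C x (hunit C (htgt C x)) y) =
      shcomp C (runit C x) (sid C y))"

text \<open>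
A sub-double category of C is given by its carriers D = (objects, vertical morphisms,
horizontal morphisms, 2-morphisms); all structure (s, t, i, horizontal composition, unitors,
associator, compositions and identities) is the restriction of that of C.
\<close>
type_synonym ('o, 'v, 'h, 'c) subdbl = "'o set \<times> 'v set \<times> 'h set \<times> 'c set"

definition carriers :: "('o, 'v, 'h, 'c, 'e) dbl_scheme \<Rightarrow> ('o, 'v, 'h, 'c) subdbl" where
  "carriers C = (Ob C, Ver C, Hor C, Sq C)"

definition sub_double :: "('o, 'v, 'h, 'c, 'e) dbl_scheme \<Rightarrow> ('o, 'v, 'h, 'c) subdbl \<Rightarrow> bool" where
  "sub_double C D \<longleftrightarrow> (case D of (DO, DV, DH, DS) \<Rightarrow>
     \<comment> \<open>D_0 subcategory of C_0\<close>
     DO \<subseteq> Ob C \<and> DV \<subseteq> Ver C \<and>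
     (\<forall>f\<in>DV. vdom C f \<in> DO \<and> vcod C f \<in> DO) \<and>
     (\<forall>a\<in>DO. vid C a \<in> DV) \<and>
     (\<forall>f\<in>DV. \<forall>g\<in>DV. vcod C f = vdom C g \<longrightarrow> vcomp C g f \<in> DV) \<and>
     \<comment> \<open>D_1 subcategory of C_1\<close>
     DH \<subseteq> Hor C \<and> DS \<subseteq> Sq C \<and>
     (\<forall>a\<in>DS. sdom C a \<in> DH \<and> scod C a \<in> DH) \<and>
     (\<forall>x\<in>DH. sid C x \<in> DS) \<and>
     (\<forall>a\<in>DS. \<forall>b\<in>DS. scod C a = sdom C b \<longrightarrow> scomp C b a \<in> DS) \<and>
     \<comment> \<open>s, t restrict\<close>
     (\<forall>x\<in>DH. hsrc C x \<in> DO \<and> htgt C x \<in> DO) \<and>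
     (\<forall>a\<in>DS. ssrc C a \<in> DV \<and> stgt C a \<in> DV) \<and>
     \<comment> \<open>i restricts\<close>
     (\<forall>a\<in>DO. hunit C a \<in> DH) \<and> (\<forall>f\<in>DV. sunit C f \<in> DS) \<and>
     \<comment> \<open>horizontal composition restricts\<close>
     (\<forall>x\<in>DH. \<forall>y\<in>DH. htgt C x = hsrc C y \<longrightarrow> hcomp C x y \<in> DH) \<and>
     (\<forall>a\<in>DS. \<forall>b\<in>DS. stgt C a = ssrc C b \<longrightarrow> shcomp C a b \<in> DS) \<and>
     \<comment> \<open>unitors and associator restrict to natural isomorphisms of D\<close>
     (\<forall>x\<in>DH. lunit C x \<in> DS \<and> iso_in C DS (lunit C x)) \<and>
     (\<forall>x\<in>DH. runit C x \<in> DS \<and> iso_in C DS (runit C x)) \<and>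
     (\<forall>x\<in>DH. \<forall>y\<in>DH. \<forall>z\<in>DH. htgt C x = hsrc C y \<longrightarrow> htgt C y = hsrc C z \<longrightarrow>
        assoc C x y z \<in> DS \<and> iso_in C DS (assoc C x y z)))"

definition complete_sub :: "('o, 'v, 'h, 'c, 'e) dbl_scheme \<Rightarrow> ('o, 'v, 'h, 'c) subdbl \<Rightarrow> bool" where
  "complete_sub C D \<longleftrightarrow> sub_double C D \<and>
     (case D of (DO, DV, DH, DS) \<Rightarrow> DO = Ob C \<and> DV = Ver C \<and> DH = Hor C)"

definition generated_complete :: "('o, 'v, 'h, 'c, 'e) dbl_scheme \<Rightarrow> 'c set \<Rightarrow> ('o, 'v, 'h, 'c) subdbl" where
  "generated_complete C X =
     (Ob C, Ver C, Hor C,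
      \<Inter>{DS. \<exists>DO DV DH. complete_sub C (DO, DV, DH, DS) \<and> X \<subseteq> DS})"

definition globularily_generated :: "('o, 'v, 'h, 'c, 'e) dbl_scheme \<Rightarrow> bool" where
  "globularily_generated C \<longleftrightarrow>
     carriers C = generated_complete C {a. globular C a}"

text \<open>Decorated horizontalization H^*D = (D_0, HD) of a sub-double category D of C:
  objects, vertical morphisms, horizontal morphisms and globular 2-morphisms of D
  (the structure being that of C restricted).\<close>
definition decorated_horiz :: "('o, 'v, 'h, 'c, 'e) dbl_scheme \<Rightarrow> ('o, 'v, 'h, 'c) subdbl \<Rightarrow>
    'o set \<times> 'v set \<times> 'h set \<times> 'c set" where
  "decorated_horiz C D = (case D of (DO, DV, DH, DS) \<Rightarrow>
     (DO, DV, DH, {a\<in>DS. globular C a}))"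

end

theory Submission
  imports Defs
begin

text \<open>
A sub-double category with the same decorated horizontalization as \<open>C\<close> is exactly a complete
sub-double category containing all globular 2-morphisms. Hence \<open>C\<close> is minimal among the
internalizations of \<open>H\<^sup>*C\<close> iff \<open>C\<close> is the only complete sub-double category containing
its globular 2-morphisms, i.e. iff the complete sub-double category they generate is \<open>C\<close>.
\<close>

lemma sub_double_carriers:
  assumes "double_category C"
  shows "sub_double C (carriers C)"
  using assms
  unfolding double_category_def sub_double_def carriers_def cat_axioms_def functor_axioms_def
  by auto

lemma sub_double_Sq_subset:
  assumes "sub_double C (DO, DV, DH, DS)"
  shows "DS \<subseteq> Sq C"
  using assms by (simp add: sub_double_def)

lemma complete_sub_eq_carriers_iff:
  assumes "complete_sub C (DO, DV, DH, DS)"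
  shows "(DO, DV, DH, DS) = carriers C \<longleftrightarrow> Sq C \<subseteq> DS"
  using assms sub_double_Sq_subset[of C DO DV DH DS]
  by (auto simp: complete_sub_def carriers_def)

lemma decorated_horiz_eq_carriers_iff:
  assumes "sub_double C (DO, DV, DH, DS)"
  shows "decorated_horiz C (DO, DV, DH, DS) = decorated_horiz C (carriers C) \<longleftrightarrow>
         complete_sub C (DO, DV, DH, DS) \<and> {a. globular C a} \<subseteq> DS"
  using assms sub_double_Sq_subset[OF assms]
  by (auto simp: decorated_horiz_def carriers_def complete_sub_def globular_def)

lemma generated_complete_eq_carriers_iff:
  assumes "double_category C" and "X \<subseteq> Sq C"
  shows "generated_complete C X = carriers C \<longleftrightarrow>
         (\<forall>DO DV DH DS. complete_sub C (DO, DV, DH, DS) \<and> X \<subseteq> DS \<longrightarrow>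
            (DO, DV, DH, DS) = carriers C)"
proof -
  let ?F = "{DS. \<exists>DO DV DH. complete_sub C (DO, DV, DH, DS) \<and> X \<subseteq> DS}"
  have "Sq C \<in> ?F"
    using sub_double_carriers[OF assms(1)] assms(2)
    by (auto simp: complete_sub_def carriers_def)
  have "generated_complete C X = carriers C \<longleftrightarrow> \<Inter>?F = Sq C"
    by (simp add: generated_complete_def carriers_def)
  also have "\<dots> \<longleftrightarrow> (\<forall>DS\<in>?F. Sq C \<subseteq> DS)"
    using \<open>Sq C \<in> ?F\<close> by blast
  also have "\<dots> \<longleftrightarrow> (\<forall>DO DV DH DS. complete_sub C (DO, DV, DH, DS) \<and> X \<subseteq> DS \<longrightarrow> Sq C \<subseteq> DS)"
    by blast
  also have "\<dots> \<longleftrightarrow> (\<forall>DO DV DH DS. complete_sub C (DO, DV, DH, DS) \<and> X \<subseteq> DS \<longrightarrow>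
      (DO, DV, DH, DS) = carriers C)"
    using complete_sub_eq_carriers_iff[of C] by meson
  finally show ?thesis .
qed

theorem corollary3p3:
  fixes C :: "('o, 'v, 'h, 'c) dbl"
  assumes "double_category C"
  shows "globularily_generated C \<longleftrightarrow>
         \<not> (\<exists>D. sub_double C D \<and> D \<noteq> carriers C \<and>
               decorated_horiz C D = decorated_horiz C (carriers C))"
proof -
  have "{a. globular C a} \<subseteq> Sq C"
    by (auto simp: globular_def)
  then have "globularily_generated C \<longleftrightarrow>
      (\<forall>DO DV DH DS. complete_sub C (DO, DV, DH, DS) \<and> {a. globular C a} \<subseteq> DS \<longrightarrow>
         (DO, DV, DH, DS) = carriers C)"
    using generated_complete_eq_carriers_iff[OF assms]
    by (metis globularily_generated_def)
  also have "\<dots> \<longleftrightarrow> (\<forall>DO DV DH DS. sub_double C (DO, DV, DH, DS) \<and>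
      decorated_horiz C (DO, DV, DH, DS) = decorated_horiz C (carriers C) \<longrightarrow>
         (DO, DV, DH, DS) = carriers C)"
    using decorated_horiz_eq_carriers_iff[of C] by (auto simp: complete_sub_def)
  also have "\<dots> \<longleftrightarrow> \<not> (\<exists>D. sub_double C D \<and> D \<noteq> carriers C \<and>
      decorated_horiz C D = decorated_horiz C (carriers C))"
    by (metis prod_cases4)
  finally show ?thesis .
qed

end
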